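(* Let $X$, $Y_k$ ($k\in\mathbb N$) and norms $\|\cdot\|_{X\oplus Y_k}$ be as in the generalized $\ell^2$-sum setting, and let $k\in\mathbb N$. Then: (i) for $x\in X$, $y_k\in Y_k$: $\|x+y_k\|_\Sigma=\|x+y_k\|_{X\oplus Y_k}$; (ii) for $x^*\in X^*$, $y_k^*\in Y_k^*$: $\|x^*+y_k^*\|_\Sigma=\|x^*+y_k^*\|_{X\oplus Y_k}$, where the left side is the dual norm of $\|\cdot\|_\Sigma$; (iii) for $x^*\in X^*$: $\|x^*\|_\Sigma=\|x^*\|_X$.
   Context: Setting: $(X,\|\cdot\|_X)$ and $(Y_k,\|\cdot\|_{Y_k})$, $k\in\mathbb N$, are Banach spaces; for each $k$, $\|\cdot\|_{X\oplus Y_k}$ is a norm on $X\oplus Y_k$ coinciding with $\|\cdot\|_X$ on $X$ and with $\|\cdot\|_{Y_k}$ on $Y_k$, and monotone: $\|x+y_k\|_{X\oplus Y_k}\ge\|x\|_X$. Duals of direct sums are identified with direct sums of duals via $(x^*+y^* )(x+y)=x^*(x)+y^*(y)$ (so a functional on a summand is regarded as a functional on the whole sum, vanishing on the other summands). $\Lambda(X\oplus Y_k)$ is the set of functionals $x^*+\sum_k\alpha_ky_k^*$ with $x^*\in X^*$, $y_k^*\in Y_k^*$, $\|x^*+y_k^*\|_{X\oplus Y_k}\le1$ for all $k$, $0\le\alpha_k\le1$, $\sum\alpha_k^2\le1$. $\Sigma(X\oplus Y_k)=\{x+y_1+y_2+\dots:x\in X,y_k\in Y_k,\sum\|y_k\|_{Y_k}^2<\infty\}$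 with $\|z\|_\Sigma=\sup\{|z^*(z)|:z^*\in\Lambda(X\oplus Y_k)\}$; the dual norm is also denoted $\|\cdot\|_\Sigma$. *)

theory Defs
  imports "HOL-Analysis.Analysis"
begin

text \<open>The spaces Y_k are linear subspaces Y k of a common ambient real vector space 'y,
  each equipped with its own norm ny k (complete on Y k). The norm on X (+) Y_k is
  a function N k on pairs (x,y) with y in Y k.\<close>

definition is_norm_on :: "'a::real_vector set \<Rightarrow> ('a \<Rightarrow> real) \<Rightarrow> bool" where
  "is_norm_on S n \<longleftrightarrow>
     (\<forall>x\<in>S. 0 \<le> n x) \<and> (\<forall>x\<in>S. n x = 0 \<longleftrightarrow> x = 0) \<and>
     (\<forall>x\<in>S. \<forall>c. n (c *\<^sub>R x) = \<bar>c\<bar> * n x) \<and>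
     (\<forall>x\<in>S. \<forall>y\<in>S. n (x + y) \<le> n x + n y)"

definition complete_on :: "'a::real_vector set \<Rightarrow> ('a \<Rightarrow> real) \<Rightarrow> bool" where
  "complete_on S n \<longleftrightarrow>
     (\<forall>f. (\<forall>i. f i \<in> S) \<and> (\<forall>e>0. \<exists>M. \<forall>i\<ge>M. \<forall>j\<ge>M. n (f i - f j) < e)
          \<longrightarrow> (\<exists>l\<in>S. (\<lambda>i. n (f i - l)) \<longlonglongrightarrow> 0))"

definition linear_on :: "'a::real_vector set \<Rightarrow> ('a \<Rightarrow> real) \<Rightarrow> bool" where
  "linear_on S f \<longleftrightarrow>
     (\<forall>x\<in>S. \<forall>y\<in>S. \<forall>a b. f (a *\<^sub>R x + b *\<^sub>R y) = a * f x + b * f y)"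

definition bounded_functional_on :: "'a::real_vector set \<Rightarrow> ('a \<Rightarrow> real) \<Rightarrow> ('a \<Rightarrow> real) \<Rightarrow> bool" where
  "bounded_functional_on S n f \<longleftrightarrow> linear_on S f \<and> (\<exists>C. \<forall>x\<in>S. \<bar>f x\<bar> \<le> C * n x)"

definition dual_norm :: "'a set \<Rightarrow> ('a \<Rightarrow> real) \<Rightarrow> ('a \<Rightarrow> real) \<Rightarrow> real" where
  "dual_norm S n f = Sup {\<bar>f z\<bar> | z. z \<in> S \<and> n z \<le> 1}"

definition l2sum_setting ::
  "(nat \<Rightarrow> 'y::real_vector set) \<Rightarrow> (nat \<Rightarrow> 'y \<Rightarrow> real) \<Rightarrow> (nat \<Rightarrow> ('x::banach \<times> 'y) \<Rightarrow> real) \<Rightarrow> bool" where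
  "l2sum_setting Y ny N \<longleftrightarrow>
     (\<forall>k. subspace (Y k) \<and> is_norm_on (Y k) (ny k) \<and> complete_on (Y k) (ny k)) \<and>
     (\<forall>k. is_norm_on (UNIV \<times> Y k) (N k)) \<and>
     (\<forall>k. \<forall>x. N k (x, 0) = norm x) \<and>
     (\<forall>k. \<forall>y\<in>Y k. N k (0, y) = ny k y) \<and>
     (\<forall>k. \<forall>x. \<forall>y\<in>Y k. norm x \<le> N k (x, y))"

text \<open>Sigma(X (+) Y_k): x + y_1 + y_2 + ... represented by the pair (x, (y_k)_k).\<close>
definition SigmaSp :: "(nat \<Rightarrow> 'y::real_vector set) \<Rightarrow> (nat \<Rightarrow> 'y \<Rightarrow> real) \<Rightarrow> ('x \<times> (nat \<Rightarrow> 'y)) set" where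
  "SigmaSp Y ny = {(x, ys). (\<forall>k. ys k \<in> Y k) \<and> summable (\<lambda>k. (ny k (ys k))\<^sup>2)}"

text \<open>Lambda(X (+) Y_k): x* + sum_k alpha_k y_k*, represented by the triple (x*, (y_k*)_k, alpha).\<close>
definition LambdaSet ::
  "(nat \<Rightarrow> 'y::real_vector set) \<Rightarrow> (nat \<Rightarrow> 'y \<Rightarrow> real) \<Rightarrow> (nat \<Rightarrow> ('x::banach \<times> 'y) \<Rightarrow> real)
     \<Rightarrow> (('x \<Rightarrow> real) \<times> (nat \<Rightarrow> 'y \<Rightarrow> real) \<times> (nat \<Rightarrow> real)) set" where
  "LambdaSet Y ny N = {(xs, yss, \<alpha>).
      bounded_linear xs \<and>
      (\<forall>k. bounded_functional_on (Y k) (ny k) (yss k)) \<and>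
      (\<forall>k. dual_norm (UNIV \<times> Y k) (N k) (\<lambda>(x, y). xs x + yss k y) \<le> 1) \<and>
      (\<forall>k. 0 \<le> \<alpha> k \<and> \<alpha> k \<le> 1) \<and>
      summable (\<lambda>k. (\<alpha> k)\<^sup>2) \<and> (\<Sum>k. (\<alpha> k)\<^sup>2) \<le> 1}"

definition lam_apply :: "(('x \<Rightarrow> real) \<times> (nat \<Rightarrow> 'y \<Rightarrow> real) \<times> (nat \<Rightarrow> real)) \<Rightarrow> ('x \<times> (nat \<Rightarrow> 'y)) \<Rightarrow> real" where
  "lam_apply l z = (case l of (xs, yss, \<alpha>) \<Rightarrow> case z of (x, ys) \<Rightarrow>
      xs x + (\<Sum>k. \<alpha> k * yss k (ys k)))"

definition sigma_norm ::
  "(nat \<Rightarrow> 'y::real_vector set) \<Rightarrow> (nat \<Rightarrow> 'y \<Rightarrow> real) \<Rightarrow> (nat \<Rightarrow> ('x::banach \<times> 'y) \<Rightarrow> real)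
     \<Rightarrow> ('x \<times> (nat \<Rightarrow> 'y)) \<Rightarrow> real" where
  "sigma_norm Y ny N z = Sup {\<bar>lam_apply l z\<bar> | l. l \<in> LambdaSet Y ny N}"

definition sigma_dual_norm ::
  "(nat \<Rightarrow> 'y::real_vector set) \<Rightarrow> (nat \<Rightarrow> 'y \<Rightarrow> real) \<Rightarrow> (nat \<Rightarrow> ('x::banach \<times> 'y) \<Rightarrow> real)
     \<Rightarrow> (('x \<times> (nat \<Rightarrow> 'y)) \<Rightarrow> real) \<Rightarrow> real" where
  "sigma_dual_norm Y ny N f = dual_norm (SigmaSp Y ny) (sigma_norm Y ny N) f"

end

theory Submission
  imports Defs
begin

text \<open>
  Every functional of \<open>\<Lambda>\<close> acts on \<open>x + y\<^sub>k\<close> as the convex combination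
  \<open>\<alpha>\<^sub>k (x\<^sup>* + y\<^sub>k\<^sup>*)(x + y\<^sub>k) + (1 - \<alpha>\<^sub>k) x\<^sup>*(x)\<close>, and both terms are bounded by
  \<open>\<parallel>x + y\<^sub>k\<parallel>\<^bsub>X\<oplus>Y\<^sub>k\<^esub>\<close> thanks to monotonicity of the norm. Conversely, a Hahn--Banach
  norming functional of \<open>x + y\<^sub>k\<close> in \<open>(X \<oplus> Y\<^sub>k)\<^sup>*\<close> is itself an element of \<open>\<Lambda>\<close>
  (with \<open>\<alpha>\<close> the \<open>k\<close>-th unit vector); applied to an arbitrary \<open>z = x + \<Sum> y\<^sub>j\<close> it also shows
  \<open>\<parallel>x + y\<^sub>k\<parallel>\<^bsub>X\<oplus>Y\<^sub>k\<^esub> \<le> \<parallel>z\<parallel>\<^sub>\<Sigma>\<close>. Hence \<open>z \<mapsto> x + y\<^sub>k\<close> is a contraction from \<open>\<Sigma>\<close> onto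
  \<open>X \<oplus> Y\<^sub>k\<close> with an isometric right inverse, so the two unit balls have the same image
  under any functional factoring through it, and the dual norms in (ii) and (iii) agree.
\<close>

lemma linear_onD:
  "linear_on S f \<Longrightarrow> x \<in> S \<Longrightarrow> y \<in> S \<Longrightarrow> f (a *\<^sub>R x + b *\<^sub>R y) = a * f x + b * f y"
  unfolding linear_on_def by blast

lemma linear_on_scaleR: "linear_on S f \<Longrightarrow> x \<in> S \<Longrightarrow> f (c *\<^sub>R x) = c * f x"
  using linear_onD[of S f x x c 0] by simp

lemma linear_on_add: "linear_on S f \<Longrightarrow> x \<in> S \<Longrightarrow> y \<in> S \<Longrightarrow> f (x + y) = f x + f y"
  using linear_onD[of S f x y 1 1] by simp

lemma linear_on_0: "linear_on S f \<Longrightarrow> subspace S \<Longrightarrow> f 0 = 0"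
  using linear_on_scaleR[of S f 0 0] by (simp add: subspace_0)

lemma linear_imp_linear_on: "linear f \<Longrightarrow> linear_on S f"
  unfolding linear_on_def by (simp add: linear_add linear_scale)

lemma linear_on_pair:
  assumes "linear xs" and "linear_on T ys"
  shows "linear_on (UNIV \<times> T) (\<lambda>(x, y). xs x + ys y)"
  using assms by (auto simp: linear_on_def linear_add linear_scale algebra_simps)

lemma is_norm_onD:
  assumes "is_norm_on S n" and "x \<in> S"
  shows is_norm_on_nonneg: "0 \<le> n x"
    and is_norm_on_eq_0_iff: "n x = 0 \<longleftrightarrow> x = 0"
    and is_norm_on_scaleR: "n (c *\<^sub>R x) = \<bar>c\<bar> * n x"
    and is_norm_on_triangle: "y \<in> S \<Longrightarrow> n (x + y) \<le> n x + n y"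
  using assms unfolding is_norm_on_def by auto

lemma is_norm_on_0: "is_norm_on S n \<Longrightarrow> subspace S \<Longrightarrow> n 0 = 0"
  using is_norm_on_eq_0_iff[of S n 0] by (simp add: subspace_0)

lemma is_norm_on_minus: "is_norm_on S n \<Longrightarrow> x \<in> S \<Longrightarrow> n (- x) = n x"
  using is_norm_on_scaleR[of S n x "- 1"] by simp

lemma is_norm_on_norm: "is_norm_on S norm"
  by (simp add: is_norm_on_def norm_triangle_ineq)

section \<open>Hahn--Banach on a subspace of a real vector space\<close>

text \<open>Partial linear functionals below \<open>p\<close> are represented by their graphs, ordered by
  inclusion, so that Zorn's lemma applies to sets.\<close>

definition dominated_graph :: "'a::real_vector set \<Rightarrow> ('a \<Rightarrow> real) \<Rightarrow> ('a \<times> real) set \<Rightarrow> bool" where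
  "dominated_graph V p G \<longleftrightarrow> G \<subseteq> V \<times> UNIV \<and>
     (\<forall>x a b. (x, a) \<in> G \<longrightarrow> (x, b) \<in> G \<longrightarrow> a = b) \<and>
     (\<forall>x a y b s t. (x, a) \<in> G \<longrightarrow> (y, b) \<in> G \<longrightarrow> (s *\<^sub>R x + t *\<^sub>R y, s * a + t * b) \<in> G) \<and>
     (\<forall>x a. (x, a) \<in> G \<longrightarrow> a \<le> p x)"

lemma dominated_graphD:
  assumes "dominated_graph V p G"
  shows dominated_graph_subset: "(x, a) \<in> G \<Longrightarrow> x \<in> V"
    and dominated_graph_unique: "(x, a) \<in> G \<Longrightarrow> (x, b) \<in> G \<Longrightarrow> a = b"
    and dominated_graph_lincomb: "(x, a) \<in> G \<Longrightarrow> (y, b) \<in> G \<Longrightarrow> (s *\<^sub>R x + t *\<^sub>R y, s * a + t * b) \<in> G"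
    and dominated_graph_le: "(x, a) \<in> G \<Longrightarrow> a \<le> p x"
  using assms unfolding dominated_graph_def by blast+

lemma dominated_graph_chain_Union:
  assumes "subset.chain {G. dominated_graph V p G} C"
  shows "dominated_graph V p (\<Union>C)"
proof -
  have dom: "dominated_graph V p G" if "G \<in> C" for G
    using assms that by (auto simp: subset_chain_def)
  have common: "\<exists>G\<in>C. u \<in> G \<and> v \<in> G" if "u \<in> \<Union>C" "v \<in> \<Union>C" for u v
    using assms that unfolding subset_chain_def by blast
  show ?thesis
    unfolding dominated_graph_def
  proof (intro conjI allI impI)
    show "\<Union>C \<subseteq> V \<times> UNIV"
      using dom dominated_graph_subset by fast
    show "a = b" if "(x, a) \<in> \<Union>C" "(x, b) \<in> \<Union>C" for x a b
      using common[OF that] dominated_graph_unique[OF dom] by blast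
    show "(s *\<^sub>R x + t *\<^sub>R y, s * a + t * b) \<in> \<Union>C" if "(x, a) \<in> \<Union>C" "(y, b) \<in> \<Union>C"
      for x a y b s t
      using common[OF that] dom dominated_graph_lincomb by blast
    show "a \<le> p x" if "(x, a) \<in> \<Union>C" for x a
      using that dom dominated_graph_le by blast
  qed
qed

lemma dominated_graph_coordinate_unique:
  assumes G: "dominated_graph V p G" and xa: "(x, a) \<in> G" and yb: "(y, b) \<in> G"
    and w: "w \<notin> fst ` G" and eq: "x + t *\<^sub>R w = y + u *\<^sub>R w"
  shows "t = u"
proof (rule ccontr)
  assume "t \<noteq> u"
  moreover have "x - y = (u - t) *\<^sub>R w" using eq by (simp add: algebra_simps)
  ultimately have "w = (1 / (u - t)) *\<^sub>R x + (- 1 / (u - t)) *\<^sub>R y"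
    by (simp add: scaleR_diff_right[symmetric])
  then show False
    using w dominated_graph_lincomb[OF G xa yb, of "1 / (u - t)" "- 1 / (u - t)"]
    by (metis fst_conv image_eqI)
qed

lemma total_dominated_graph_functional:
  assumes M: "dominated_graph V p M" and total: "\<And>x. x \<in> V \<Longrightarrow> \<exists>a. (x, a) \<in> M"
  shows "\<exists>f. linear_on V f \<and> (\<forall>x\<in>V. f x \<le> p x) \<and> (\<forall>x a. (x, a) \<in> M \<longrightarrow> f x = a)"
proof -
  define f where "f x = (THE a. (x, a) \<in> M)" for x
  have graph: "(x, f x) \<in> M" if "x \<in> V" for x
    using total[OF that] dominated_graph_unique[OF M] unfolding f_def by (metis theI)
  have f_eq: "f x = a" if "(x, a) \<in> M" for x a
    using graph dominated_graph_unique[OF M] dominated_graph_subset[OF M] that by blast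
  have "linear_on V f"
    unfolding linear_on_def
  proof (intro ballI allI)
    fix x y a b
    assume "x \<in> V" "y \<in> V"
    then show "f (a *\<^sub>R x + b *\<^sub>R y) = a * f x + b * f y"
      using f_eq dominated_graph_lincomb[OF M graph graph] by blast
  qed
  moreover have "f x \<le> p x" if "x \<in> V" for x
    using graph[OF that] dominated_graph_le[OF M] by blast
  ultimately show ?thesis using f_eq by blast
qed

locale sublinear_on =
  fixes V :: "'a::real_vector set" and p :: "'a \<Rightarrow> real"
  assumes V_subspace: "subspace V"
    and subadditive: "x \<in> V \<Longrightarrow> y \<in> V \<Longrightarrow> p (x + y) \<le> p x + p y"
    and nonneg_homogeneous: "x \<in> V \<Longrightarrow> 0 \<le> c \<Longrightarrow> p (c *\<^sub>R x) = c * p x"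
begin

lemma dominated_graph_extension_le:
  assumes G: "dominated_graph V p G" and xa: "(x, a) \<in> G" and w: "w \<in> V"
    and below: "\<And>y b. (y, b) \<in> G \<Longrightarrow> b - p (y - w) \<le> c"
    and above: "\<And>y b. (y, b) \<in> G \<Longrightarrow> c \<le> p (y + w) - b"
  shows "a + t * c \<le> p (x + t *\<^sub>R w)"
proof -
  have scaled: "((1 / s) *\<^sub>R x, (1 / s) * a) \<in> G" for s
    using dominated_graph_lincomb[OF G xa xa, of "1 / s" 0] by simp
  have xV: "x \<in> V" using dominated_graph_subset[OF G xa] .
  consider "t = 0" | "t > 0" | "t < 0" by linarith
  then show ?thesis
  proof cases
    case 1
    then show ?thesis using dominated_graph_le[OF G xa] by simp
  next
    case 2
    have "t * c \<le> t * (p ((1 / t) *\<^sub>R x + w) - (1 / t) * a)"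
      using above[OF scaled] 2 by (simp add: mult_left_mono)
    also have "\<dots> = p (t *\<^sub>R ((1 / t) *\<^sub>R x + w)) - a"
      using nonneg_homogeneous[of "(1 / t) *\<^sub>R x + w" t] 2 xV w V_subspace
      by (simp add: subspace_add subspace_scale right_diff_distrib)
    also have "t *\<^sub>R ((1 / t) *\<^sub>R x + w) = x + t *\<^sub>R w"
      using 2 by (simp add: scaleR_add_right)
    finally show ?thesis by simp
  next
    case 3
    define s where "s = - t"
    have s: "s > 0" using 3 s_def by simp
    have "a - p (s *\<^sub>R ((1 / s) *\<^sub>R x - w)) = s * ((1 / s) * a - p ((1 / s) *\<^sub>R x - w))"
      using nonneg_homogeneous[of "(1 / s) *\<^sub>R x - w" s] s xV w V_subspace
      by (simp add: subspace_diff subspace_scale right_diff_distrib)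
    also have "\<dots> \<le> s * c"
      using below[OF scaled] s by (simp add: mult_left_mono)
    finally show ?thesis using s by (simp add: s_def scaleR_diff_right)
  qed
qed

lemma dominated_graph_zero: "dominated_graph V p {(0, 0)}"
  using V_subspace nonneg_homogeneous[of 0 0] by (simp add: dominated_graph_def subspace_0)

lemma dominated_graph_extension:
  assumes G: "dominated_graph V p G" and zero: "(0, 0) \<in> G"
    and w: "w \<in> V" "w \<notin> fst ` G"
    and below: "\<And>y b. (y, b) \<in> G \<Longrightarrow> b - p (y - w) \<le> c"
    and above: "\<And>y b. (y, b) \<in> G \<Longrightarrow> c \<le> p (y + w) - b"
    and G'_def: "G' \<equiv> {(x + t *\<^sub>R w, a + t * c) | x a t. (x, a) \<in> G}"
  shows "dominated_graph V p G'" and "G \<subseteq> G'" and "(w, c) \<in> G'"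
proof -
  show "dominated_graph V p G'"
    unfolding dominated_graph_def
  proof (intro conjI allI impI)
    show "G' \<subseteq> V \<times> UNIV"
      unfolding G'_def using dominated_graph_subset[OF G] w(1) V_subspace
      by (auto intro!: subspace_add subspace_scale)
  next
    fix z a' b'
    assume "(z, a') \<in> G'" "(z, b') \<in> G'"
    then obtain x a t y b u where xa: "(x, a) \<in> G" and yb: "(y, b) \<in> G"
      and e: "z = x + t *\<^sub>R w" "a' = a + t * c" "z = y + u *\<^sub>R w" "b' = b + u * c"
      unfolding G'_def by blast
    have "t = u"
      using dominated_graph_coordinate_unique[OF G xa yb w(2)] e by simp
    then show "a' = b'" using e dominated_graph_unique[OF G xa] yb by auto
  next
    fix z a' z' b' s r
    assume "(z, a') \<in> G'" "(z', b') \<in> G'"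
    then obtain x a t y b u where xa: "(x, a) \<in> G" and yb: "(y, b) \<in> G"
      and e: "z = x + t *\<^sub>R w" "a' = a + t * c" "z' = y + u *\<^sub>R w" "b' = b + u * c"
      unfolding G'_def by blast
    have "s *\<^sub>R z + r *\<^sub>R z' = (s *\<^sub>R x + r *\<^sub>R y) + (s * t + r * u) *\<^sub>R w"
      and "s * a' + r * b' = (s * a + r * b) + (s * t + r * u) * c"
      using e by (simp_all add: algebra_simps)
    then show "(s *\<^sub>R z + r *\<^sub>R z', s * a' + r * b') \<in> G'"
      unfolding G'_def using dominated_graph_lincomb[OF G xa yb] by blast
  next
    fix z a'
    assume "(z, a') \<in> G'"
    then show "a' \<le> p z"
      unfolding G'_def using dominated_graph_extension_le[OF G _ w(1) below above] by blast
  qed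
  show "G \<subseteq> G'"
    unfolding G'_def by (force intro: exI[of _ 0])
  show "(w, c) \<in> G'"
    unfolding G'_def using zero by (force intro: exI[of _ 1])
qed

lemma dominated_graph_extend:
  assumes G: "dominated_graph V p G" and zero: "(0, 0) \<in> G"
    and w: "w \<in> V" "w \<notin> fst ` G"
  shows "\<exists>G'. dominated_graph V p G' \<and> G \<subset> G'"
proof -
  have key: "b - p (y - w) \<le> p (x + w) - a" if "(x, a) \<in> G" "(y, b) \<in> G" for x a y b
  proof -
    have "a + b \<le> p ((x + w) + (y - w))"
      using dominated_graph_le[OF G dominated_graph_lincomb[OF G that, of 1 1]] by simp
    also have "\<dots> \<le> p (x + w) + p (y - w)"
      using subadditive dominated_graph_subset[OF G] that w(1) V_subspace
      by (meson subspace_add subspace_diff)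
    finally show ?thesis by simp
  qed
  define c where "c = Sup {b - p (y - w) | y b. (y, b) \<in> G}"
  have below: "b - p (y - w) \<le> c" if "(y, b) \<in> G" for y b
    unfolding c_def using key[OF zero] that by (intro cSup_upper) (auto simp: bdd_above_def)
  have above: "c \<le> p (x + w) - a" if "(x, a) \<in> G" for x a
    unfolding c_def using key[OF that] zero by (intro cSup_least) auto
  define G' where "G' \<equiv> {(x + t *\<^sub>R w, a + t * c) | x a t. (x, a) \<in> G}"
  show ?thesis
    using dominated_graph_extension[OF G zero w below above G'_def] w(2) by force
qed

lemma dominated_graph_through:
  assumes v: "v \<in> V"
  shows "\<exists>G. dominated_graph V p G \<and> (v, p v) \<in> G"
proof -
  have p0: "p 0 = 0" using nonneg_homogeneous[of 0 0] V_subspace by (simp add: subspace_0)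
  show ?thesis
  proof (cases "v = 0")
    case True
    then show ?thesis using dominated_graph_zero p0 by blast
  next
    case False
    have "p 0 \<le> p v + p (- v)"
      using subadditive[of v "- v"] v V_subspace by (simp add: subspace_neg)
    then have below: "b - p (y - v) \<le> p v" and above: "p v \<le> p (y + v) - b"
      if "(y, b) \<in> {(0, 0)}" for y b
      using that p0 by auto
    define G where "G \<equiv> {(x + t *\<^sub>R v, a + t * p v) | x a t. (x, a) \<in> {(0::'a, 0::real)}}"
    show ?thesis
      using dominated_graph_extension[OF dominated_graph_zero _ v _ below above G_def] False
      by auto
  qed
qed

lemma hahn_banach_point:
  assumes v: "v \<in> V"
  shows "\<exists>f. linear_on V f \<and> (\<forall>x\<in>V. f x \<le> p x) \<and> f v = p v"
proof -
  define A where "A = {G. dominated_graph V p G \<and> (v, p v) \<in> G}"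
  have "A \<noteq> {}" using dominated_graph_through[OF v] unfolding A_def by blast
  moreover have "\<Union>C \<in> A" if "C \<noteq> {}" "subset.chain A C" for C
    using that dominated_graph_chain_Union[of V p C] unfolding A_def subset_chain_def by blast
  ultimately obtain M where "M \<in> A" and max: "\<And>G. G \<in> A \<Longrightarrow> M \<subseteq> G \<Longrightarrow> G = M"
    using subset_Zorn_nonempty[of A] by blast
  then have M: "dominated_graph V p M" and vM: "(v, p v) \<in> M" unfolding A_def by auto
  have zero: "(0, 0) \<in> M" using dominated_graph_lincomb[OF M vM vM, of 0 0] by simp
  have "\<exists>a. (x, a) \<in> M" if x: "x \<in> V" for x
  proof (rule ccontr)
    assume "\<nexists>a. (x, a) \<in> M"
    then have "x \<notin> fst ` M" by force
    then obtain G where "dominated_graph V p G" "M \<subset> G"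
      using dominated_graph_extend[OF M zero x] by blast
    then show False using max[of G] vM unfolding A_def by blast
  qed
  then show ?thesis using total_dominated_graph_functional[OF M] vM by blast
qed

end

lemma norming_functional:
  assumes S: "subspace S" and n: "is_norm_on S n" and v: "v \<in> S"
  shows "\<exists>\<phi>. linear_on S \<phi> \<and> (\<forall>z\<in>S. \<bar>\<phi> z\<bar> \<le> n z) \<and> \<phi> v = n v"
proof -
  interpret sublinear_on S n
    using S is_norm_on_triangle[OF n] is_norm_on_scaleR[OF n] by unfold_locales auto
  obtain \<phi> where lin: "linear_on S \<phi>" and le: "\<forall>z\<in>S. \<phi> z \<le> n z" and eq: "\<phi> v = n v"
    using hahn_banach_point[OF v] by blast
  have "- \<phi> z \<le> n z" if "z \<in> S" for z
    using le subspace_neg[OF S that] linear_on_scaleR[OF lin that, of "- 1"]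
      is_norm_on_minus[OF n that] by auto
  then show ?thesis using lin le eq by (intro exI[of _ \<phi>]) (auto simp: abs_le_iff)
qed

section \<open>Dual norms\<close>

lemma dual_norm_bdd_above:
  assumes n: "is_norm_on S n" and K: "\<forall>z\<in>S. \<bar>F z\<bar> \<le> K * n z"
  shows "bdd_above {\<bar>F z\<bar> | z. z \<in> S \<and> n z \<le> 1}"
proof (rule bdd_aboveI)
  fix d
  assume "d \<in> {\<bar>F z\<bar> | z. z \<in> S \<and> n z \<le> 1}"
  then obtain z where z: "z \<in> S" "n z \<le> 1" "d = \<bar>F z\<bar>" by blast
  have "d \<le> \<bar>K\<bar> * n z"
    using K z is_norm_on_nonneg[OF n z(1)] by (smt (verit) abs_ge_self mult_right_mono)
  also have "\<dots> \<le> \<bar>K\<bar>" using z(2) by (simp add: mult_left_le)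
  finally show "d \<le> \<bar>K\<bar>" .
qed

lemma dual_norm_nonneg:
  assumes S: "subspace S" and n: "is_norm_on S n" and K: "\<forall>z\<in>S. \<bar>F z\<bar> \<le> K * n z"
  shows "0 \<le> dual_norm S n F"
proof -
  have "\<bar>F 0\<bar> \<in> {\<bar>F z\<bar> | z. z \<in> S \<and> n z \<le> 1}"
    using S is_norm_on_0[OF n S] by (auto simp: subspace_0)
  then show ?thesis
    unfolding dual_norm_def by (rule cSup_upper2[OF _ _ dual_norm_bdd_above[OF n K]]) simp
qed

lemma dual_norm_bound:
  assumes S: "subspace S" and n: "is_norm_on S n" and F: "linear_on S F"
    and K: "\<forall>z\<in>S. \<bar>F z\<bar> \<le> K * n z" and z: "z \<in> S"
  shows "\<bar>F z\<bar> \<le> dual_norm S n F * n z"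
proof (cases "n z = 0")
  case True
  then show ?thesis using is_norm_on_eq_0_iff[OF n z] linear_on_0[OF F S] by simp
next
  case False
  then have pos: "n z > 0" using is_norm_on_nonneg[OF n z] by simp
  have "(1 / n z) *\<^sub>R z \<in> S" "n ((1 / n z) *\<^sub>R z) \<le> 1"
    using subspace_scale[OF S z] is_norm_on_scaleR[OF n z] pos by auto
  then have "\<bar>F ((1 / n z) *\<^sub>R z)\<bar> \<le> dual_norm S n F"
    unfolding dual_norm_def by (blast intro: cSup_upper[OF _ dual_norm_bdd_above[OF n K]])
  then show ?thesis
    using linear_on_scaleR[OF F z] pos by (simp add: abs_mult pos_divide_le_eq mult.commute)
qed

lemma dual_norm_le:
  assumes S: "subspace S" and n: "is_norm_on S n"
    and bound: "\<forall>z\<in>S. \<bar>F z\<bar> \<le> d * n z" and d: "0 \<le> d"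
  shows "dual_norm S n F \<le> d"
  unfolding dual_norm_def
proof (rule cSup_least)
  show "{\<bar>F z\<bar> | z. z \<in> S \<and> n z \<le> 1} \<noteq> {}"
    using S is_norm_on_0[OF n S] subspace_0[OF S] by force
  fix t
  assume "t \<in> {\<bar>F z\<bar> | z. z \<in> S \<and> n z \<le> 1}"
  then show "t \<le> d" using bound d by (force intro: order_trans mult_left_le)
qed

lemma dual_norm_eq_if_section:
  assumes proj: "\<And>s. s \<in> S \<Longrightarrow> \<pi> s \<in> T \<and> m (\<pi> s) \<le> n s"
    and emb: "\<And>t. t \<in> T \<Longrightarrow> \<iota> t \<in> S \<and> n (\<iota> t) \<le> m t \<and> \<pi> (\<iota> t) = t"
  shows "dual_norm S n (\<lambda>s. f (\<pi> s)) = dual_norm T m f"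
proof -
  have "{\<bar>f (\<pi> s)\<bar> | s. s \<in> S \<and> n s \<le> 1} = {\<bar>f t\<bar> | t. t \<in> T \<and> m t \<le> 1}"
  proof (intro equalityI subsetI)
    fix r
    assume "r \<in> {\<bar>f (\<pi> s)\<bar> | s. s \<in> S \<and> n s \<le> 1}"
    then show "r \<in> {\<bar>f t\<bar> | t. t \<in> T \<and> m t \<le> 1}" using proj by fastforce
  next
    fix r
    assume "r \<in> {\<bar>f t\<bar> | t. t \<in> T \<and> m t \<le> 1}"
    then obtain t where "t \<in> T" "m t \<le> 1" "r = \<bar>f t\<bar>" by blast
    then show "r \<in> {\<bar>f (\<pi> s)\<bar> | s. s \<in> S \<and> n s \<le> 1}"
      using emb[of t] by (metis (mono_tags, lifting) mem_Collect_eq order_trans)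
  qed
  then show ?thesis unfolding dual_norm_def by simp
qed

lemma onorm_eq_dual_norm:
  fixes f :: "'a::real_normed_vector \<Rightarrow> real"
  assumes f: "bounded_linear f"
  shows "onorm f = dual_norm UNIV norm f"
proof (rule antisym)
  have lin: "linear_on UNIV f" using bounded_linear.linear[OF f] by (rule linear_imp_linear_on)
  have bound: "\<forall>x\<in>UNIV. \<bar>f x\<bar> \<le> onorm f * norm x" using onorm[OF f] by simp
  show "onorm f \<le> dual_norm UNIV norm f"
    using dual_norm_nonneg[OF subspace_UNIV is_norm_on_norm bound]
      dual_norm_bound[OF subspace_UNIV is_norm_on_norm lin bound]
    by (intro onorm_bound) auto
  show "dual_norm UNIV norm f \<le> onorm f"
    by (rule dual_norm_le[OF subspace_UNIV is_norm_on_norm bound onorm_pos_le[OF f]])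
qed

section \<open>The generalized \<open>l\<^sup>2\<close>-sum\<close>

lemma mem_LambdaSet: "(xs, yss, \<alpha>) \<in> LambdaSet Y ny N \<longleftrightarrow>
      bounded_linear xs \<and>
      (\<forall>k. bounded_functional_on (Y k) (ny k) (yss k)) \<and>
      (\<forall>k. dual_norm (UNIV \<times> Y k) (N k) (\<lambda>(x, y). xs x + yss k y) \<le> 1) \<and>
      (\<forall>k. 0 \<le> \<alpha> k \<and> \<alpha> k \<le> 1) \<and>
      summable (\<lambda>k. (\<alpha> k)\<^sup>2) \<and> (\<Sum>k. (\<alpha> k)\<^sup>2) \<le> 1"
  unfolding LambdaSet_def by simp

lemma mem_SigmaSp: "(x, zs) \<in> SigmaSp Y ny \<longleftrightarrow> (\<forall>k. zs k \<in> Y k) \<and> summable (\<lambda>k. (ny k (zs k))\<^sup>2)"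
  unfolding SigmaSp_def by simp

lemma lam_apply_eq: "lam_apply (xs, yss, \<alpha>) (x, zs) = xs x + (\<Sum>k. \<alpha> k * yss k (zs k))"
  unfolding lam_apply_def by simp

locale l2sum =
  fixes Y :: "nat \<Rightarrow> 'y::real_vector set" and ny :: "nat \<Rightarrow> 'y \<Rightarrow> real"
    and N :: "nat \<Rightarrow> ('x::banach \<times> 'y) \<Rightarrow> real"
  assumes setting: "l2sum_setting Y ny N"
begin

lemma
  shows Y_subspace: "subspace (Y j)"
    and ny_norm: "is_norm_on (Y j) (ny j)"
    and N_norm: "is_norm_on (UNIV \<times> Y j) (N j)"
    and N_fst: "N j (x, 0) = norm x"
    and N_snd: "y \<in> Y j \<Longrightarrow> N j (0, y) = ny j y"
    and norm_le_N: "y \<in> Y j \<Longrightarrow> norm x \<le> N j (x, y)"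
  using setting unfolding l2sum_setting_def by blast+

lemma zero_in_Y: "0 \<in> Y j"
  using Y_subspace by (rule subspace_0)

lemma sum_subspace: "subspace (UNIV \<times> Y j)"
  using subspace_Times[OF subspace_UNIV Y_subspace] .

lemma ny_le_N:
  assumes y: "y \<in> Y j"
  shows "ny j y \<le> 2 * N j (x, y)"
proof -
  have "N j (0, y) \<le> N j (x, y) + N j (- x, 0)"
    using is_norm_on_triangle[OF N_norm, of "(x, y)" j "(- x, 0)"] y zero_in_Y by simp
  then show ?thesis using N_snd[OF y] N_fst[of j "- x"] norm_le_N[OF y, of x] by simp
qed

text \<open>\<open>dual_norm\<close> is a \<open>Sup\<close> in the reals, so the condition \<open>dual_norm \<dots> \<le> 1\<close> in \<open>\<Lambda>\<close>
  carries information only once the underlying set is known to be bounded.\<close>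

lemma pair_functional_bounded:
  assumes xs: "bounded_linear xs" and ys: "bounded_functional_on (Y j) (ny j) ys"
  shows "\<exists>K. \<forall>z\<in>UNIV \<times> Y j. \<bar>(\<lambda>(x, y). xs x + ys y) z\<bar> \<le> K * N j z"
proof -
  obtain C where C: "\<And>y. y \<in> Y j \<Longrightarrow> \<bar>ys y\<bar> \<le> C * ny j y"
    using ys unfolding bounded_functional_on_def by blast
  obtain K where K: "\<And>x. norm (xs x) \<le> norm x * K" "K > 0"
    using bounded_linear.pos_bounded[OF xs] by blast
  have "\<bar>xs x + ys y\<bar> \<le> (K + 2 * \<bar>C\<bar>) * N j (x, y)" if y: "y \<in> Y j" for x y
  proof -
    have "\<bar>xs x\<bar> \<le> K * N j (x, y)"
      using K norm_le_N[OF y, of x] by (smt (verit) mult.commute mult_left_mono real_norm_def)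
    moreover have "\<bar>ys y\<bar> \<le> \<bar>C\<bar> * (2 * N j (x, y))"
      using C[OF y] is_norm_on_nonneg[OF ny_norm y] ny_le_N[OF y, of x]
      by (smt (verit) abs_ge_self abs_not_less_zero mult_mono)
    ultimately show ?thesis by (simp add: algebra_simps)
  qed
  then show ?thesis by fast
qed

lemma LambdaSet_pair_le:
  assumes l: "(xs, yss, \<alpha>) \<in> LambdaSet Y ny N" and y: "y \<in> Y j"
  shows "\<bar>xs x + yss j y\<bar> \<le> N j (x, y)"
proof -
  define F where "F = (\<lambda>(x, y). xs x + yss j y)"
  have xs: "bounded_linear xs" and ys: "bounded_functional_on (Y j) (ny j) (yss j)"
    and dual: "dual_norm (UNIV \<times> Y j) (N j) F \<le> 1"
    using l unfolding mem_LambdaSet F_def by blast+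
  have lin: "linear_on (UNIV \<times> Y j) F"
    unfolding F_def using linear_on_pair bounded_linear.linear[OF xs] ys
    unfolding bounded_functional_on_def by blast
  obtain K where K: "\<forall>z\<in>UNIV \<times> Y j. \<bar>F z\<bar> \<le> K * N j z"
    using pair_functional_bounded[OF xs ys] unfolding F_def by blast
  have "\<bar>F (x, y)\<bar> \<le> dual_norm (UNIV \<times> Y j) (N j) F * N j (x, y)"
    using dual_norm_bound[OF sum_subspace N_norm lin K] y by simp
  also have "\<dots> \<le> N j (x, y)"
    using mult_right_mono[OF dual is_norm_on_nonneg[OF N_norm, of "(x, y)"]] y by simp
  finally show ?thesis unfolding F_def by simp
qed

lemma LambdaSet_fst_le:
  assumes l: "(xs, yss, \<alpha>) \<in> LambdaSet Y ny N"
  shows "\<bar>xs x\<bar> \<le> norm x"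
proof -
  have "yss 0 0 = 0"
    using l Y_subspace unfolding mem_LambdaSet bounded_functional_on_def by (metis linear_on_0)
  then show ?thesis using LambdaSet_pair_le[OF l zero_in_Y, of x 0] N_fst by simp
qed

lemma LambdaSet_snd_le:
  assumes l: "(xs, yss, \<alpha>) \<in> LambdaSet Y ny N" and y: "y \<in> Y j"
  shows "\<bar>yss j y\<bar> \<le> ny j y"
proof -
  have "xs 0 = 0" using l unfolding mem_LambdaSet by (simp add: bounded_linear.linear linear_0)
  then show ?thesis using LambdaSet_pair_le[OF l y, of 0] N_snd[OF y] by simp
qed

text \<open>Termwise AM--GM; the bound only serves to make the supremum defining \<open>\<parallel>\<cdot>\<parallel>\<^sub>\<Sigma>\<close> finite.\<close>

lemma lam_apply_le:
  assumes l: "(xs, yss, \<alpha>) \<in> LambdaSet Y ny N" and z: "(x, zs) \<in> SigmaSp Y ny"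
  shows "\<bar>lam_apply (xs, yss, \<alpha>) (x, zs)\<bar> \<le> norm x + (1 + (\<Sum>j. (ny j (zs j))\<^sup>2)) / 2"
proof -
  have \<alpha>: "\<And>j. 0 \<le> \<alpha> j" and sa: "summable (\<lambda>j. (\<alpha> j)\<^sup>2)" and sa1: "(\<Sum>j. (\<alpha> j)\<^sup>2) \<le> 1"
    using l unfolding mem_LambdaSet by blast+
  have zs: "\<And>j. zs j \<in> Y j" and sb: "summable (\<lambda>j. (ny j (zs j))\<^sup>2)"
    using z unfolding mem_SigmaSp by blast+
  define g where "g j = ((\<alpha> j)\<^sup>2 + (ny j (zs j))\<^sup>2) / 2" for j
  have sg: "summable g" unfolding g_def using sa sb by (intro summable_divide summable_add)
  have "\<bar>\<alpha> j * yss j (zs j)\<bar> \<le> \<alpha> j * ny j (zs j)" for j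
    using LambdaSet_snd_le[OF l zs] \<alpha> by (simp add: abs_mult mult_left_mono)
  also have "\<alpha> j * ny j (zs j) \<le> g j" for j
    unfolding g_def using sum_squares_bound[of "\<alpha> j" "ny j (zs j)"] by simp
  finally have "\<bar>\<alpha> j * yss j (zs j)\<bar> \<le> g j" for j .
  then have "\<bar>\<Sum>j. \<alpha> j * yss j (zs j)\<bar> \<le> suminf g"
    using norm_suminf_le[of "\<lambda>j. \<alpha> j * yss j (zs j)" g] sg by simp
  also have "suminf g = ((\<Sum>j. (\<alpha> j)\<^sup>2) + (\<Sum>j. (ny j (zs j))\<^sup>2)) / 2"
    unfolding g_def using suminf_divide[OF summable_add[OF sa sb]] suminf_add[OF sa sb] by simp
  finally show ?thesis
    unfolding lam_apply_eq using LambdaSet_fst_le[OF l, of x] sa1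
      abs_triangle_ineq[of "xs x" "\<Sum>j. \<alpha> j * yss j (zs j)"] by argo
qed

lemma lam_apply_le_sigma_norm:
  assumes l: "l \<in> LambdaSet Y ny N" and z: "z \<in> SigmaSp Y ny"
  shows "\<bar>lam_apply l z\<bar> \<le> sigma_norm Y ny N z"
proof -
  obtain x zs where z_eq: "z = (x, zs)" by (cases z)
  have "bdd_above {\<bar>lam_apply l z\<bar> | l. l \<in> LambdaSet Y ny N}"
    using lam_apply_le z unfolding z_eq by (intro bdd_aboveI) fastforce
  then show ?thesis
    unfolding sigma_norm_def using l by (blast intro: cSup_upper)
qed

lemma single_in_LambdaSet:
  assumes xs: "bounded_linear xs" and ys: "bounded_functional_on (Y k) (ny k) ys"
    and le: "\<And>x y. y \<in> Y k \<Longrightarrow> \<bar>xs x + ys y\<bar> \<le> N k (x, y)"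
  defines "l \<equiv> (xs, \<lambda>j. if j = k then ys else (\<lambda>_. 0), \<lambda>j. if j = k then 1 else 0)"
  shows "l \<in> LambdaSet Y ny N" and "lam_apply l (x, zs) = xs x + ys (zs k)"
proof -
  have "bounded_functional_on (Y j) (ny j) (if j = k then ys else (\<lambda>_. 0))" for j
    using ys by (auto simp: bounded_functional_on_def linear_on_def intro: exI[of _ 0])
  moreover have
    "dual_norm (UNIV \<times> Y j) (N j) (\<lambda>(x, y). xs x + (if j = k then ys else (\<lambda>_. 0)) y) \<le> 1"
    for j
  proof -
    have "ys 0 = 0"
      using ys Y_subspace unfolding bounded_functional_on_def by (metis linear_on_0)
    then have "\<bar>xs x\<bar> \<le> N j (x, y)" if "y \<in> Y j" for x y
      using le[of 0 x] zero_in_Y N_fst norm_le_N[OF that] by (simp add: order_trans)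
    then show ?thesis
      using le by (intro dual_norm_le[OF sum_subspace N_norm]) auto
  qed
  moreover have "(\<lambda>j. (if j = k then 1 else 0 :: real)\<^sup>2) sums 1"
  proof -
    have "(\<lambda>j. (if j = k then 1 else 0 :: real)\<^sup>2) = (\<lambda>j. if j = k then 1 else 0)"
      by auto
    then show ?thesis using sums_single[of k "\<lambda>_. 1 :: real"] by simp
  qed
  ultimately show "l \<in> LambdaSet Y ny N"
    unfolding l_def mem_LambdaSet using xs sums_unique by (auto simp: sums_iff)
  show "lam_apply l (x, zs) = xs x + ys (zs k)"
  proof -
    have "(\<lambda>j. (if j = k then 1 else 0) * (if j = k then ys else (\<lambda>_. 0)) (zs j))
        = (\<lambda>j. if j = k then ys (zs k) else 0)"
      by auto
    then show ?thesis
      unfolding l_def lam_apply_eq using sums_unique[OF sums_single[of k "\<lambda>_. ys (zs k)"]]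
      by simp
  qed
qed

lemma sum_functional_components:
  assumes lin: "linear_on (UNIV \<times> Y k) \<phi>" and le: "\<forall>z\<in>UNIV \<times> Y k. \<bar>\<phi> z\<bar> \<le> N k z"
  shows "bounded_linear (\<lambda>x. \<phi> (x, 0))"
    and "bounded_functional_on (Y k) (ny k) (\<lambda>y. \<phi> (0, y))"
    and "y \<in> Y k \<Longrightarrow> \<phi> (x, 0) + \<phi> (0, y) = \<phi> (x, y)"
proof -
  have in_sum: "(x, y) \<in> UNIV \<times> Y k" if "y \<in> Y k" for x y
    using that by simp
  show "bounded_linear (\<lambda>x. \<phi> (x, 0))"
  proof (rule bounded_linear_intro[where K = 1])
    show "\<phi> (x + x', 0) = \<phi> (x, 0) + \<phi> (x', 0)" for x x'
      using linear_on_add[OF lin in_sum in_sum, OF zero_in_Y zero_in_Y] by simp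
    show "\<phi> (c *\<^sub>R x, 0) = c *\<^sub>R \<phi> (x, 0)" for c x
      using linear_on_scaleR[OF lin in_sum, OF zero_in_Y] by simp
    show "norm (\<phi> (x, 0)) \<le> norm x * 1" for x
      using bspec[OF le, of "(x, 0)"] zero_in_Y N_fst by simp
  qed
  show "bounded_functional_on (Y k) (ny k) (\<lambda>y. \<phi> (0, y))"
    unfolding bounded_functional_on_def linear_on_def
  proof (intro conjI ballI allI exI[of _ 1])
    show "\<phi> (0, a *\<^sub>R y + b *\<^sub>R y') = a * \<phi> (0, y) + b * \<phi> (0, y')"
      if "y \<in> Y k" "y' \<in> Y k" for y y' a b
      using linear_onD[OF lin in_sum[of y 0] in_sum[of y' 0]] that by simp
    show "\<bar>\<phi> (0, y)\<bar> \<le> 1 * ny k y" if "y \<in> Y k" for y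
      using bspec[OF le, of "(0, y)"] N_snd[OF that] that by simp
  qed
  show "\<phi> (x, 0) + \<phi> (0, y) = \<phi> (x, y)" if "y \<in> Y k"
    using linear_on_add[OF lin in_sum[of 0 x] in_sum[of y 0]] zero_in_Y that by simp
qed

lemma LambdaSet_nonempty: "LambdaSet Y ny N \<noteq> {}"
proof -
  have "bounded_functional_on (Y 0) (ny 0) (\<lambda>_. 0)"
    unfolding bounded_functional_on_def linear_on_def by (simp add: exI[of _ 0])
  then show ?thesis
    using single_in_LambdaSet(1)[of "\<lambda>_. 0"] is_norm_on_nonneg[OF N_norm] by fastforce
qed

lemma sigma_norm_le:
  assumes "\<And>l. l \<in> LambdaSet Y ny N \<Longrightarrow> \<bar>lam_apply l z\<bar> \<le> B"
  shows "sigma_norm Y ny N z \<le> B"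
  unfolding sigma_norm_def using LambdaSet_nonempty assms by (intro cSup_least) auto

lemma N_le_sigma_norm:
  assumes z: "(x, zs) \<in> SigmaSp Y ny"
  shows "N k (x, zs k) \<le> sigma_norm Y ny N (x, zs)"
proof -
  have zs: "zs k \<in> Y k" using z unfolding mem_SigmaSp by blast
  obtain \<phi> where lin: "linear_on (UNIV \<times> Y k) \<phi>" and le: "\<forall>z\<in>UNIV \<times> Y k. \<bar>\<phi> z\<bar> \<le> N k z"
    and eq: "\<phi> (x, zs k) = N k (x, zs k)"
    using norming_functional[OF sum_subspace N_norm, of "(x, zs k)" k] zs by auto
  note \<phi> = sum_functional_components[OF lin le]
  have "\<bar>\<phi> (x', 0) + \<phi> (0, y)\<bar> \<le> N k (x', y)" if "y \<in> Y k" for x' y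
    using le \<phi>(3)[OF that] that by simp
  note l = single_in_LambdaSet[OF \<phi>(1,2) this]
  show ?thesis
    using lam_apply_le_sigma_norm[OF l(1) z] l(2)[of x zs] \<phi>(3)[OF zs] eq by simp
qed

lemma norm_le_sigma_norm:
  assumes "(x, zs) \<in> SigmaSp Y ny"
  shows "norm x \<le> sigma_norm Y ny N (x, zs)"
  using norm_le_N[of "zs 0" 0 x] N_le_sigma_norm[OF assms, of 0] assms
  unfolding mem_SigmaSp by fastforce

lemma single_in_SigmaSp:
  assumes y: "y \<in> Y k"
  shows "(x, \<lambda>j. if j = k then y else 0) \<in> SigmaSp Y ny"
proof -
  have "(\<lambda>j. (ny j (if j = k then y else 0))\<^sup>2) = (\<lambda>j. if j = k then (ny k y)\<^sup>2 else 0)"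
    using is_norm_on_0[OF ny_norm Y_subspace] by auto
  then show ?thesis
    unfolding mem_SigmaSp using y zero_in_Y sums_summable[OF sums_single[of k]] by auto
qed

lemma sigma_norm_single:
  assumes y: "y \<in> Y k"
  shows "sigma_norm Y ny N (x, \<lambda>j. if j = k then y else 0) = N k (x, y)"
proof (rule antisym)
  show "sigma_norm Y ny N (x, \<lambda>j. if j = k then y else 0) \<le> N k (x, y)"
  proof (rule sigma_norm_le)
    fix l
    assume "l \<in> LambdaSet Y ny N"
    moreover obtain xs yss \<alpha> where l_eq: "l = (xs, yss, \<alpha>)" by (cases l)
    ultimately have l: "(xs, yss, \<alpha>) \<in> LambdaSet Y ny N" by simp
    have \<alpha>: "0 \<le> \<alpha> k" "\<alpha> k \<le> 1" using l unfolding mem_LambdaSet by blast+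
    have "yss j 0 = 0" for j
      using LambdaSet_snd_le[OF l zero_in_Y] is_norm_on_0[OF ny_norm Y_subspace] by force
    then have "(\<lambda>j. \<alpha> j * yss j (if j = k then y else 0))
        = (\<lambda>j. if j = k then \<alpha> k * yss k y else 0)"
      by auto
    then have "lam_apply l (x, \<lambda>j. if j = k then y else 0)
        = \<alpha> k * (xs x + yss k y) + (1 - \<alpha> k) * xs x"
      unfolding l_eq lam_apply_eq using sums_unique[OF sums_single[of k "\<lambda>_. \<alpha> k * yss k y"]]
      by (simp add: algebra_simps)
    also have "\<bar>\<dots>\<bar> \<le> \<alpha> k * \<bar>xs x + yss k y\<bar> + (1 - \<alpha> k) * \<bar>xs x\<bar>"
      using \<alpha> abs_triangle_ineq[of "\<alpha> k * (xs x + yss k y)" "(1 - \<alpha> k) * xs x"]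
      by (simp add: abs_mult)
    also have "\<dots> \<le> N k (x, y)"
      using LambdaSet_pair_le[OF l y] LambdaSet_fst_le[OF l, of x] norm_le_N[OF y, of x] \<alpha>
      by (intro convex_bound_le) auto
    finally show "\<bar>lam_apply l (x, \<lambda>j. if j = k then y else 0)\<bar> \<le> N k (x, y)" .
  qed
  show "N k (x, y) \<le> sigma_norm Y ny N (x, \<lambda>j. if j = k then y else 0)"
    using N_le_sigma_norm[OF single_in_SigmaSp[OF y], of k] by simp
qed

lemma sigma_dual_norm_component:
  "sigma_dual_norm Y ny N (\<lambda>(x, zs). f (x, zs k)) = dual_norm (UNIV \<times> Y k) (N k) f"
proof -
  have "dual_norm (SigmaSp Y ny) (sigma_norm Y ny N) (\<lambda>s. f ((\<lambda>(x, zs). (x, zs k)) s))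
      = dual_norm (UNIV \<times> Y k) (N k) f"
  proof (rule dual_norm_eq_if_section[where \<iota> = "\<lambda>(x, y). (x, \<lambda>j. if j = k then y else 0)"])
    show "(\<lambda>(x, zs). (x, zs k)) s \<in> UNIV \<times> Y k
        \<and> N k ((\<lambda>(x, zs). (x, zs k)) s) \<le> sigma_norm Y ny N s" if "s \<in> SigmaSp Y ny" for s
      using that N_le_sigma_norm by (cases s) (auto simp: mem_SigmaSp)
    show "(\<lambda>(x, y). (x, \<lambda>j. if j = k then y else 0)) t \<in> SigmaSp Y ny
        \<and> sigma_norm Y ny N ((\<lambda>(x, y). (x, \<lambda>j. if j = k then y else 0)) t) \<le> N k t
        \<and> (\<lambda>(x, zs). (x, zs k)) ((\<lambda>(x, y). (x, \<lambda>j. if j = k then y else 0)) t) = t"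
      if "t \<in> UNIV \<times> Y k" for t
      using that single_in_SigmaSp sigma_norm_single by auto
  qed
  then show ?thesis unfolding sigma_dual_norm_def by (simp add: case_prod_beta')
qed

lemma sigma_dual_norm_fst:
  assumes "bounded_linear xs"
  shows "sigma_dual_norm Y ny N (\<lambda>(x, zs). xs x) = onorm xs"
proof -
  have "sigma_norm Y ny N (x, \<lambda>_. 0) = norm x" and "(x, \<lambda>_. 0) \<in> SigmaSp Y ny" for x
    using sigma_norm_single[OF zero_in_Y, where k = 0 and x = x]
      single_in_SigmaSp[OF zero_in_Y, where k = 0 and x = x] N_fst
    by simp_all
  then have "dual_norm (SigmaSp Y ny) (sigma_norm Y ny N) (\<lambda>s. xs (fst s)) = dual_norm UNIV norm xs"
    using norm_le_sigma_norm
    by (intro dual_norm_eq_if_section[where \<iota> = "\<lambda>x. (x, \<lambda>_. 0)"]) auto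
  then show ?thesis
    unfolding sigma_dual_norm_def onorm_eq_dual_norm[OF assms] by (simp add: case_prod_beta')
qed

end

theorem proposition2p4:
  fixes Y :: "nat \<Rightarrow> 'y::real_vector set"
    and ny :: "nat \<Rightarrow> 'y \<Rightarrow> real"
    and N :: "nat \<Rightarrow> ('x::banach \<times> 'y) \<Rightarrow> real"
    and k :: nat
  assumes setting: "l2sum_setting Y ny N"
  shows "(\<forall>x. \<forall>y\<in>Y k.
           sigma_norm Y ny N (x, (\<lambda>j. if j = k then y else 0)) = N k (x, y)) \<and>
         (\<forall>xs ys. bounded_linear xs \<and> bounded_functional_on (Y k) (ny k) ys \<longrightarrow>
           sigma_dual_norm Y ny N (\<lambda>(x, zs). xs x + ys (zs k))
             = dual_norm (UNIV \<times> Y k) (N k) (\<lambda>(x, y). xs x + ys y)) \<and>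
         (\<forall>xs. bounded_linear xs \<longrightarrow>
           sigma_dual_norm Y ny N (\<lambda>(x, zs). xs x) = onorm xs)"
proof -
  interpret l2sum Y ny N by (rule l2sum.intro[OF setting])
  have "sigma_dual_norm Y ny N (\<lambda>(x, zs). xs x + ys (zs k))
      = dual_norm (UNIV \<times> Y k) (N k) (\<lambda>(x, y). xs x + ys y)" for xs ys
    using sigma_dual_norm_component[of "\<lambda>(x, y). xs x + ys y" k] by simp
  then show ?thesis using sigma_norm_single sigma_dual_norm_fst by blast
qed

end
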